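(* Let $N\in\mathbb{N}$, $h=L/N$, $M>0$. Suppose $\phi_1,\phi_2\in\mathcal{C}_{\rm per}$ satisfy $\langle\phi_1-\phi_2,1\rangle=0$ (i.e. $\phi_1-\phi_2\in\mathring{\mathcal{C}}_{\rm per}$), $\|\phi_1\|_\infty<1$ and $\|\phi_2\|_\infty\le M$. Then $$\|\mathcal{L}^{-1}(\phi_1-\phi_2)\|_\infty\le C_1,$$ where $C_1>0$ depends only upon $M$ and $\Omega$; in particular $C_1$ is independent of the mesh spacing $h$.
   Context: $\Omega=(0,L)^3$, periodic. Grid points $p_i=(i-\tfrac12)h$. $\mathcal{C}_{\rm per}$: real $N$-periodic grid functions on cell centers $(p_i,p_j,p_k)$; $\langle\nu,\xi\rangle=h^3\sum_{i,j,k=1}^N\nu_{i,j,k}\xi_{i,j,k}$; $\mathring{\mathcal{C}}_{\rm per}$: those with $\langle\nu,1\rangle=0$. $\Delta_h$ is the standard 7-point discrete Laplacian $\Delta_h\nu_{i,j,k}=h^{-2}(\nu_{i\pm1,j,k}+\nu_{i,j\pm1,k}+\nu_{i,j,k\pm1}-6\nu_{i,j,k})$ (sum over the six neighbors). $\mathcal{L}=-\Delta_h$, and for $\psi\in\mathring{\mathcal{C}}_{\rm per}$, $\mathcal{L}^{-1}\psi$ denotes the unique $v\in\mathring{\mathcal{C}}_{\rm per}$ with $-\Delta_h v=\psi$. $\|\nu\|_\infty=\max_{i,j,k}|\nu_{i,j,k}|$. *)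

theory Defs
  imports Complex_Main
begin

text \<open>Grid functions on cell centers, indexed by integer triples (i,j,k);
  the cell (i,j,k) has center ((i-1/2)h,(j-1/2)h,(k-1/2)h). N-periodicity is
  imposed explicitly; the fundamental cells are i,j,k in {1..N}.\<close>

type_synonym grid = "int \<Rightarrow> int \<Rightarrow> int \<Rightarrow> real"

definition grid_periodic :: "nat \<Rightarrow> grid \<Rightarrow> bool" where
  "grid_periodic N f \<longleftrightarrow>
     (\<forall>i j k. f (i + int N) j k = f i j k \<and> f i (j + int N) k = f i j k
            \<and> f i j (k + int N) = f i j k)"

definition grid_inner :: "real \<Rightarrow> nat \<Rightarrow> grid \<Rightarrow> grid \<Rightarrow> real" where
  "grid_inner h N f g =
     h ^ 3 * (\<Sum>i\<in>{1..int N}. \<Sum>j\<in>{1..int N}. \<Sum>k\<in>{1..int N}. f i j k * g i j k)"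

definition lap_h :: "real \<Rightarrow> grid \<Rightarrow> grid" where
  "lap_h h f i j k =
     (f (i + 1) j k + f (i - 1) j k + f i (j + 1) k + f i (j - 1) k
      + f i j (k + 1) + f i j (k - 1) - 6 * f i j k) / h ^ 2"

definition Linv :: "real \<Rightarrow> nat \<Rightarrow> grid \<Rightarrow> grid" where
  "Linv h N \<psi> = (THE v. grid_periodic N v \<and> grid_inner h N v (\<lambda>_ _ _. 1) = 0
                         \<and> (\<forall>i j k. - lap_h h v i j k = \<psi> i j k))"

definition grid_sup :: "nat \<Rightarrow> grid \<Rightarrow> real" where
  "grid_sup N f = Max {\<bar>f i j k\<bar> | i j k. i \<in> {1..int N} \<and> j \<in> {1..int N} \<and> k \<in> {1..int N}}"

end

theory Submission
  imports Defs "HOL-Analysis.Complex_Transcendental"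
begin

text \<open>The characters e_k(x) = exp(2 pi i k.x/N), with k in a centred window of frequencies,
  form an orthogonal basis of the N-periodic grid functions and diagonalise -Delta_h with
  eigenvalues lambda_k = h^-2 sum_m 4 sin^2(pi k_m/N) \<ge> 4|k|^2/L^2. Hence
  L^-1 psi = N^-3 sum_{k \<noteq> 0} psi^(k)/lambda_k e_k, and Cauchy-Schwarz with Parseval gives
  |L^-1 psi| \<le> N^-3 (N^3 sum_x psi(x)^2)^(1/2) (sum_{k \<noteq> 0} lambda_k^-2)^(1/2)
  \<le> ||psi||_inf (L^2/4) (sum_{k \<noteq> 0} |k|^-4)^(1/2).
  The last lattice sum converges in three dimensions, so the bound does not depend on h.\<close>

definition unit_root :: "nat \<Rightarrow> int \<Rightarrow> complex" where
  "unit_root N t = cis (2 * pi * real_of_int t / real N)"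

lemma unit_root_add: "unit_root N (s + t) = unit_root N s * unit_root N t"
  by (simp add: unit_root_def cis_mult add_divide_distrib ring_distribs)

lemma unit_root_0 [simp]: "unit_root N 0 = 1"
  by (simp add: unit_root_def)

lemma unit_root_minus: "unit_root N (- t) = cnj (unit_root N t)"
  by (simp add: unit_root_def cis_cnj)

lemma norm_unit_root [simp]: "norm (unit_root N t) = 1"
  by (simp add: unit_root_def)

lemma unit_root_period_multiple:
  assumes "N \<ge> 1"
  shows "unit_root N (int N * m) = 1"
proof -
  have "2 * pi * real_of_int (int N * m) / real N = 2 * pi * real_of_int m"
    using assms by (simp add: field_simps)
  then show ?thesis by (simp add: unit_root_def)
qed

lemma unit_root_add_period_multiple:
  "N \<ge> 1 \<Longrightarrow> unit_root N (t + int N * m) = unit_root N t"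
  by (simp add: unit_root_add unit_root_period_multiple)

lemma unit_root_eq_1_imp_dvd:
  assumes "N \<ge> 1" "unit_root N t = 1"
  shows "int N dvd t"
proof -
  have "cos (2 * pi * real_of_int t / real N) = 1"
    using arg_cong[OF assms(2), of Re] by (simp add: unit_root_def)
  then obtain m :: int where "2 * pi * real_of_int t / real N = real_of_int m * 2 * pi"
    using cos_one_2pi_int by blast
  then have "real_of_int t = real_of_int (m * int N)"
    using assms(1) by (simp add: field_simps)
  then show ?thesis by (simp only: of_int_eq_iff) simp
qed

lemma periodic_add_multiple:
  assumes "\<And>t. g (t + int N) = g t"
  shows "g (t + int N * m) = g t"
proof (induction m rule: int_induct[where k=0])
  case (step1 i) then show ?case using assms[of "t + int N * i"] by (simp add: algebra_simps)
next
  case (step2 i) then show ?case using assms[of "t + int N * (i - 1)"] by (simp add: algebra_simps)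
qed simp

lemma sum_periodic_shift1:
  assumes "\<And>t. g (t + int N) = g t"
  shows "(\<Sum>t\<in>{s+1..s+int N}. g (t + 1)) = (\<Sum>t\<in>{s+1..s+int N}. g t)"
proof (cases "N = 0")
  case False
  have window: "{s+1..s+int N} = insert (s+1) {s+2..s+int N}"
    and shifted: "(\<lambda>t. t + 1) ` {s+1..s+int N} = insert (s+int N+1) {s+2..s+int N}"
    using False by (auto simp: image_iff intro: bexI[where x="_ - 1"])
  have "(\<Sum>t\<in>{s+1..s+int N}. g (t + 1)) = (\<Sum>t\<in>insert (s+int N+1) {s+2..s+int N}. g t)"
    using sum.reindex[of "\<lambda>t. t + 1" "{s+1..s+int N}" g] unfolding shifted
    by (simp add: inj_on_def o_def)
  also have "\<dots> = g (s + 1) + (\<Sum>t\<in>{s+2..s+int N}. g t)"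
    using assms[of "s+1"] by (simp add: ac_simps)
  finally show ?thesis unfolding window by simp
qed simp

lemma sum_periodic_shift:
  assumes "\<And>t. g (t + int N) = g t"
  shows "(\<Sum>t\<in>{s+1..s+int N}. g (t + d)) = (\<Sum>t\<in>{s+1..s+int N}. g t)"
proof (induction d rule: int_induct[where k=0])
  case (step1 i)
  have "(\<Sum>t\<in>{s+1..s+int N}. g (t + (i + 1))) = (\<Sum>t\<in>{s+1..s+int N}. g (t + 1 + i))"
    by (simp add: ac_simps)
  also have "\<dots> = (\<Sum>t\<in>{s+1..s+int N}. g (t + i))"
    by (rule sum_periodic_shift1[where g="\<lambda>t. g (t + i)"]) (metis assms add.commute add.left_commute)
  finally show ?case using step1 by simp
next
  case (step2 i)
  have "(\<Sum>t\<in>{s+1..s+int N}. g (t + i)) = (\<Sum>t\<in>{s+1..s+int N}. g (t + 1 + (i - 1)))"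
    by (simp add: ac_simps)
  also have "\<dots> = (\<Sum>t\<in>{s+1..s+int N}. g (t + (i - 1)))"
    by (rule sum_periodic_shift1[where g="\<lambda>t. g (t + (i - 1))"]) (metis assms add.commute add.left_commute)
  finally show ?case using step2 by simp
qed simp

lemma sum_unit_root_window:
  assumes "N \<ge> 1"
  shows "(\<Sum>t\<in>{s+1..s+int N}. unit_root N (d * t)) = (if int N dvd d then of_nat N else 0)"
proof (cases "int N dvd d")
  case True
  then obtain m where "d = int N * m" by auto
  then have "unit_root N (d * t) = 1" for t
    using unit_root_period_multiple[OF assms, of "m * t"] by (simp add: ac_simps)
  then show ?thesis using True by simp
next
  case False
  let ?S = "\<Sum>t\<in>{s+1..s+int N}. unit_root N (d * t)"
  have "?S * unit_root N d = (\<Sum>t\<in>{s+1..s+int N}. unit_root N (d * (t + 1)))"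
    by (simp add: sum_distrib_right unit_root_add[symmetric] ring_distribs)
  also have "\<dots> = ?S"
    by (rule sum_periodic_shift1[where g="\<lambda>t. unit_root N (d * t)"])
       (simp add: ring_distribs mult.commute[of d] unit_root_add_period_multiple[OF assms])
  finally have "?S * (unit_root N d - 1) = 0" by (simp add: algebra_simps)
  moreover have "unit_root N d \<noteq> 1" using unit_root_eq_1_imp_dvd[OF assms] False by blast
  ultimately show ?thesis using False by simp
qed

lemma window_dvd_diff_imp_eq:
  assumes "t \<in> {s+1..s+int N}" "u \<in> {s+1..s+int N}" "int N dvd (t - u)"
  shows "t = u"
proof (rule ccontr)
  assume "t \<noteq> u"
  then have "\<bar>int N\<bar> \<le> \<bar>t - u\<bar>" using dvd_imp_le_int[of "t - u" "int N"] assms(3) by simp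
  then show False using assms(1,2) by auto
qed

type_synonym idx3 = "int \<times> int \<times> int"

fun dot3 :: "idx3 \<Rightarrow> idx3 \<Rightarrow> int" where
  "dot3 (a, b, c) (i, j, l) = a * i + b * j + c * l"

fun add3 :: "idx3 \<Rightarrow> idx3 \<Rightarrow> idx3" where
  "add3 (i, j, l) (a, b, c) = (i + a, j + b, l + c)"

lemma dot3_commute: "dot3 k x = dot3 x k"
  by (cases k; cases x) (simp add: ac_simps)

lemma dot3_add3: "dot3 k (add3 x d) = dot3 k x + dot3 k d"
  by (cases k; cases x; cases d) (simp add: algebra_simps)

lemma dot3_zero [simp]: "dot3 (0, 0, 0) x = 0"
  by (cases x) simp

definition window3 :: "int \<Rightarrow> nat \<Rightarrow> idx3 set" where
  "window3 s N = {s+1..s+int N} \<times> {s+1..s+int N} \<times> {s+1..s+int N}"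

abbreviation grid_box :: "nat \<Rightarrow> idx3 set" where
  "grid_box N \<equiv> window3 0 N"

text \<open>Centring the frequencies gives |k_m| \<le> N/2, which the lower bound on the eigenvalues needs.\<close>
definition freq_box :: "nat \<Rightarrow> idx3 set" where
  "freq_box N = window3 (- ((int N + 1) div 2)) N"

lemma finite_window3 [simp]: "finite (window3 s N)"
  by (simp add: window3_def)

lemma finite_freq_box [simp]: "finite (freq_box N)"
  by (simp add: freq_box_def)

lemma card_window3: "card (window3 s N) = N ^ 3"
  by (simp add: window3_def card_cartesian_product power3_eq_cube)

lemma sum_window3:
  "sum F (window3 s N) = (\<Sum>i\<in>{s+1..s+int N}. \<Sum>j\<in>{s+1..s+int N}. \<Sum>l\<in>{s+1..s+int N}. F (i, j, l))"
  by (simp add: window3_def sum.cartesian_product)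

lemma freq_box_abs_le:
  "(a, b, c) \<in> freq_box N \<Longrightarrow> 2 * \<bar>a\<bar> \<le> int N \<and> 2 * \<bar>b\<bar> \<le> int N \<and> 2 * \<bar>c\<bar> \<le> int N"
  by (auto simp: freq_box_def window3_def)

lemma zero_in_freq_box: "N \<ge> 1 \<Longrightarrow> (0, 0, 0) \<in> freq_box N"
  by (auto simp: freq_box_def window3_def)

definition periodic3 :: "nat \<Rightarrow> (idx3 \<Rightarrow> 'a) \<Rightarrow> bool" where
  "periodic3 N F \<longleftrightarrow> (\<forall>i j l. F (i + int N, j, l) = F (i, j, l) \<and> F (i, j + int N, l) = F (i, j, l)
                        \<and> F (i, j, l + int N) = F (i, j, l))"

lemma periodic3_unit_root:
  assumes "N \<ge> 1"
  shows "periodic3 N (\<lambda>x. unit_root N (dot3 k x))"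
proof -
  obtain a b c where k: "k = (a, b, c)" by (cases k)
  have "unit_root N (a * (i + int N) + b * j + c * l) = unit_root N (a * i + b * j + c * l)"
       "unit_root N (a * i + b * (j + int N) + c * l) = unit_root N (a * i + b * j + c * l)"
       "unit_root N (a * i + b * j + c * (l + int N)) = unit_root N (a * i + b * j + c * l)" for i j l
    using unit_root_add_period_multiple[OF assms, of "a * i + b * j + c * l"]
    by (simp_all add: algebra_simps)
  then show ?thesis by (simp add: periodic3_def k)
qed

lemma sum_window3_shift:
  assumes "periodic3 N F"
  shows "(\<Sum>x\<in>window3 s N. F (add3 x d)) = sum F (window3 s N)"
proof -
  obtain d1 d2 d3 where d: "d = (d1, d2, d3)" by (cases d)
  have p1: "\<And>i j l. F (i + int N, j, l) = F (i, j, l)"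
   and p2: "\<And>i j l. F (i, j + int N, l) = F (i, j, l)"
   and p3: "\<And>i j l. F (i, j, l + int N) = F (i, j, l)" using assms by (auto simp: periodic3_def)
  let ?W = "{s+1..s+int N}"
  have "(\<Sum>x\<in>window3 s N. F (add3 x d)) = (\<Sum>i\<in>?W. \<Sum>j\<in>?W. \<Sum>l\<in>?W. F (i + d1, j + d2, l + d3))"
    by (simp add: sum_window3 d)
  also have "\<dots> = (\<Sum>i\<in>?W. \<Sum>j\<in>?W. \<Sum>l\<in>?W. F (i + d1, j + d2, l))"
    by (intro sum.cong refl sum_periodic_shift[where g="\<lambda>l. F (_, _, l)"] p3)
  also have "\<dots> = (\<Sum>i\<in>?W. \<Sum>j\<in>?W. \<Sum>l\<in>?W. F (i + d1, j, l))"
    by (intro sum.cong refl sum_periodic_shift[where g="\<lambda>j. \<Sum>l\<in>?W. F (_, j, l)"]) (simp add: p2)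
  also have "\<dots> = (\<Sum>i\<in>?W. \<Sum>j\<in>?W. \<Sum>l\<in>?W. F (i, j, l))"
    by (intro sum_periodic_shift[where g="\<lambda>i. \<Sum>j\<in>?W. \<Sum>l\<in>?W. F (i, j, l)"]) (simp add: p1)
  finally show ?thesis by (simp add: sum_window3)
qed

lemma periodic3_eqI:
  assumes "periodic3 N F" "periodic3 N G" "N \<ge> 1" "\<And>x. x \<in> grid_box N \<Longrightarrow> F x = G x"
  shows "F x = G x"
proof -
  have wrap: "\<exists>m. t + int N * m \<in> {1..int N}" for t
  proof
    have N: "0 < int N" using assms(3) by simp
    have "t + int N * (- ((t - 1) div int N)) = (t - 1) mod int N + 1"
      by (simp add: algebra_simps minus_div_mult_eq_mod[symmetric])
    then show "t + int N * (- ((t - 1) div int N)) \<in> {1..int N}"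
      using pos_mod_bound[OF N, of "t - 1"] pos_mod_sign[OF N, of "t - 1"] by simp
  qed
  have shift: "H (i + int N * m1, j + int N * m2, l + int N * m3) = H (i, j, l)"
    if "periodic3 N H" for H :: "idx3 \<Rightarrow> 'a" and i j l m1 m2 m3
  proof -
    have "H (i + int N * m1, j + int N * m2, l + int N * m3) = H (i, j + int N * m2, l + int N * m3)"
      by (rule periodic_add_multiple[where g="\<lambda>i. H (i, _, _)"]) (use that in \<open>simp add: periodic3_def\<close>)
    also have "\<dots> = H (i, j, l + int N * m3)"
      by (rule periodic_add_multiple[where g="\<lambda>j. H (_, j, _)"]) (use that in \<open>simp add: periodic3_def\<close>)
    also have "\<dots> = H (i, j, l)"
      by (rule periodic_add_multiple[where g="\<lambda>l. H (_, _, l)"]) (use that in \<open>simp add: periodic3_def\<close>)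
    finally show ?thesis .
  qed
  obtain i j l where x: "x = (i, j, l)" by (cases x)
  obtain m1 m2 m3 where "i + int N * m1 \<in> {1..int N}" "j + int N * m2 \<in> {1..int N}"
      "l + int N * m3 \<in> {1..int N}"
    using wrap by meson
  then show ?thesis
    using assms(4) shift[OF assms(1), of i m1 j m2 l m3] shift[OF assms(2), of i m1 j m2 l m3]
    by (simp add: x window3_def)
qed

lemma sum_product3:
  fixes f g h :: "_ \<Rightarrow> 'a::comm_semiring_0"
  shows "(\<Sum>a\<in>A. \<Sum>b\<in>B. \<Sum>c\<in>C. f a * g b * h c) = sum f A * sum g B * sum h C"
proof -
  have "(\<Sum>a\<in>A. \<Sum>b\<in>B. \<Sum>c\<in>C. f a * g b * h c) = (\<Sum>a\<in>A. \<Sum>b\<in>B. f a * g b * sum h C)"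
    by (simp add: sum_distrib_left)
  also have "\<dots> = (\<Sum>a\<in>A. \<Sum>b\<in>B. f a * g b) * sum h C"
    by (simp add: sum_distrib_right)
  finally show ?thesis by (simp add: sum_product)
qed

lemma sum_unit_root_window3:
  assumes "N \<ge> 1"
  shows "(\<Sum>k\<in>window3 s N. unit_root N (dot3 k (d1, d2, d3))) =
         (if int N dvd d1 \<and> int N dvd d2 \<and> int N dvd d3 then of_nat N ^ 3 else 0)"
proof -
  let ?W = "{s+1..s+int N}"
  have "(\<Sum>k\<in>window3 s N. unit_root N (dot3 k (d1, d2, d3)))
      = (\<Sum>a\<in>?W. \<Sum>b\<in>?W. \<Sum>c\<in>?W. unit_root N (d1 * a) * unit_root N (d2 * b) * unit_root N (d3 * c))"
    by (simp add: sum_window3 unit_root_add[symmetric] ac_simps)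
  also have "\<dots> = (\<Sum>a\<in>?W. unit_root N (d1 * a)) * (\<Sum>b\<in>?W. unit_root N (d2 * b))
                  * (\<Sum>c\<in>?W. unit_root N (d3 * c))"
    by (rule sum_product3)
  finally show ?thesis by (simp add: sum_unit_root_window[OF assms] power3_eq_cube)
qed

lemma sum_unit_root_freq_box:
  assumes "N \<ge> 1" "x \<in> grid_box N" "y \<in> grid_box N"
  shows "(\<Sum>k\<in>freq_box N. unit_root N (dot3 k y - dot3 k x)) = (if x = y then of_nat N ^ 3 else 0)"
proof -
  obtain x1 x2 x3 where x: "x = (x1, x2, x3)" by (cases x)
  obtain y1 y2 y3 where y: "y = (y1, y2, y3)" by (cases y)
  have "dot3 k y - dot3 k x = dot3 k (y1 - x1, y2 - x2, y3 - x3)" for k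
    by (cases k) (simp add: x y algebra_simps)
  moreover have "(int N dvd (y1 - x1) \<and> int N dvd (y2 - x2) \<and> int N dvd (y3 - x3)) \<longleftrightarrow> x = y"
    using window_dvd_diff_imp_eq[of y1 0 N x1] window_dvd_diff_imp_eq[of y2 0 N x2]
      window_dvd_diff_imp_eq[of y3 0 N x3] assms(2,3)
    by (auto simp: x y window3_def)
  ultimately show ?thesis by (simp add: freq_box_def sum_unit_root_window3[OF assms(1)])
qed

lemma sum_unit_root_grid_box:
  assumes "N \<ge> 1" "k \<in> freq_box N - {(0, 0, 0)}"
  shows "(\<Sum>x\<in>grid_box N. unit_root N (dot3 k x)) = 0"
proof -
  obtain a b c where k: "k = (a, b, c)" by (cases k)
  have "\<not> (int N dvd a \<and> int N dvd b \<and> int N dvd c)"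
    using assms zero_in_freq_box[OF assms(1)]
      window_dvd_diff_imp_eq[of a "- ((int N + 1) div 2)" N 0]
      window_dvd_diff_imp_eq[of b "- ((int N + 1) div 2)" N 0]
      window_dvd_diff_imp_eq[of c "- ((int N + 1) div 2)" N 0]
    by (auto simp: k freq_box_def window3_def)
  then show ?thesis
    unfolding k dot3_commute[of "(a, b, c)"] sum_unit_root_window3[OF assms(1)] by auto
qed

definition dft :: "nat \<Rightarrow> (idx3 \<Rightarrow> real) \<Rightarrow> idx3 \<Rightarrow> complex" where
  "dft N f k = (\<Sum>x\<in>grid_box N. of_real (f x) * unit_root N (- dot3 k x))"

lemma dft_zero_freq: "dft N f (0, 0, 0) = of_real (sum f (grid_box N))"
  by (simp add: dft_def)

lemma dft_add: "dft N (\<lambda>x. f x + g x) k = dft N f k + dft N g k"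
  by (simp add: dft_def sum.distrib distrib_right)

lemma dft_diff: "dft N (\<lambda>x. f x - g x) k = dft N f k - dft N g k"
  by (simp add: dft_def sum_subtractf left_diff_distrib)

lemma dft_mult_const: "dft N (\<lambda>x. c * f x) k = of_real c * dft N f k"
  by (simp add: dft_def sum_distrib_left mult.assoc)

lemma dft_divide_const: "dft N (\<lambda>x. f x / c) k = dft N f k / of_real c"
  by (simp add: dft_def sum_divide_distrib)

lemma dft_inversion_grid_box:
  assumes "N \<ge> 1" "y \<in> grid_box N"
  shows "(\<Sum>k\<in>freq_box N. dft N f k * unit_root N (dot3 k y)) = of_nat N ^ 3 * of_real (f y)"
proof -
  have "(\<Sum>k\<in>freq_box N. dft N f k * unit_root N (dot3 k y))
      = (\<Sum>k\<in>freq_box N. \<Sum>x\<in>grid_box N. of_real (f x) * unit_root N (dot3 k y - dot3 k x))"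
    unfolding dft_def sum_distrib_right
    by (intro sum.cong refl) (simp add: mult.assoc unit_root_add[symmetric])
  also have "\<dots> = (\<Sum>x\<in>grid_box N. of_real (f x) * (\<Sum>k\<in>freq_box N. unit_root N (dot3 k y - dot3 k x)))"
    by (subst sum.swap) (simp add: sum_distrib_left)
  also have "\<dots> = (\<Sum>x\<in>grid_box N. of_real (f x) * (if x = y then of_nat N ^ 3 else 0))"
    by (intro sum.cong refl) (simp add: sum_unit_root_freq_box[OF assms(1) _ assms(2)])
  also have "\<dots> = of_nat N ^ 3 * of_real (f y)"
    using assms(2) by (simp add: if_distrib cong: if_cong)
  finally show ?thesis .
qed

lemma dft_inversion:
  assumes "N \<ge> 1" "periodic3 N f"
  shows "(\<Sum>k\<in>freq_box N. dft N f k * unit_root N (dot3 k y)) = of_nat N ^ 3 * of_real (f y)"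
proof (rule periodic3_eqI[OF _ _ assms(1)])
  show "periodic3 N (\<lambda>y. \<Sum>k\<in>freq_box N. dft N f k * unit_root N (dot3 k y))"
    using periodic3_unit_root[OF assms(1)] unfolding periodic3_def by simp
  show "periodic3 N (\<lambda>y. of_nat N ^ 3 * (of_real (f y) :: complex))"
    using assms(2) unfolding periodic3_def by simp
qed (rule dft_inversion_grid_box[OF assms(1)])

lemma dft_parseval:
  assumes "N \<ge> 1"
  shows "(\<Sum>k\<in>freq_box N. (cmod (dft N f k))\<^sup>2) = real N ^ 3 * (\<Sum>x\<in>grid_box N. (f x)\<^sup>2)"
proof -
  have "(of_real (\<Sum>k\<in>freq_box N. (cmod (dft N f k))\<^sup>2) :: complex)
      = (\<Sum>k\<in>freq_box N. dft N f k * cnj (dft N f k))"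
    by (simp only: of_real_sum complex_norm_square)
  also have "\<dots> = (\<Sum>k\<in>freq_box N. \<Sum>x\<in>grid_box N. of_real (f x) * (unit_root N (- dot3 k x) * cnj (dft N f k)))"
    unfolding dft_def[of N f] sum_distrib_right by (simp add: mult.assoc)
  also have "\<dots> = (\<Sum>x\<in>grid_box N. of_real (f x) * cnj (\<Sum>k\<in>freq_box N. dft N f k * unit_root N (dot3 k x)))"
    by (subst sum.swap) (simp add: sum_distrib_left unit_root_minus mult.commute)
  also have "\<dots> = (\<Sum>x\<in>grid_box N. of_real (f x) * cnj (of_nat N ^ 3 * of_real (f x)))"
    by (intro sum.cong refl) (simp add: dft_inversion_grid_box[OF assms])
  also have "\<dots> = of_real (real N ^ 3 * (\<Sum>x\<in>grid_box N. (f x)\<^sup>2))"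
    by (simp add: sum_distrib_left power2_eq_square ac_simps)
  finally show ?thesis by (simp only: of_real_eq_iff)
qed

lemma dft_shift:
  assumes "N \<ge> 1" "periodic3 N f"
  shows "dft N (\<lambda>x. f (add3 x d)) k = unit_root N (dot3 k d) * dft N f k"
proof -
  define F where "F x = of_real (f x) * unit_root N (- dot3 k x)" for x
  have "periodic3 N F"
    using assms(2) periodic3_unit_root[OF assms(1), of "(- fst k, - fst (snd k), - snd (snd k))"]
    unfolding periodic3_def F_def by (cases k) simp
  have "dft N (\<lambda>x. f (add3 x d)) k = (\<Sum>x\<in>grid_box N. unit_root N (dot3 k d) * F (add3 x d))"
    unfolding dft_def F_def dot3_add3 by (intro sum.cong refl) (simp add: unit_root_add[symmetric])
  also have "\<dots> = unit_root N (dot3 k d) * sum F (grid_box N)"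
    by (simp add: sum_distrib_left[symmetric] sum_window3_shift[OF \<open>periodic3 N F\<close>])
  finally show ?thesis by (simp add: dft_def F_def)
qed

definition lap_stencil :: "real \<Rightarrow> (idx3 \<Rightarrow> 'a::real_field) \<Rightarrow> idx3 \<Rightarrow> 'a" where
  "lap_stencil h F x =
     (F (add3 x (1, 0, 0)) + F (add3 x (-1, 0, 0)) + F (add3 x (0, 1, 0)) + F (add3 x (0, -1, 0))
      + F (add3 x (0, 0, 1)) + F (add3 x (0, 0, -1)) - 6 * F x) / of_real (h\<^sup>2)"

definition grid_at :: "grid \<Rightarrow> idx3 \<Rightarrow> real" where
  "grid_at g = (\<lambda>(i, j, l). g i j l)"

lemma grid_at_apply [simp]: "grid_at g (i, j, l) = g i j l"
  by (simp add: grid_at_def)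

lemma periodic3_grid_at: "grid_periodic N g \<Longrightarrow> periodic3 N (grid_at g)"
  by (simp add: grid_periodic_def periodic3_def)

lemma grid_at_lap_h: "grid_at (lap_h h g) = lap_stencil h (grid_at g)"
  by (rule ext) (auto simp: lap_h_def lap_stencil_def)

lemma lap_stencil_sum:
  "lap_stencil h (\<lambda>x. \<Sum>k\<in>K. c k * F k x) x = (\<Sum>k\<in>K. c k * lap_stencil h (F k) x)"
  by (simp add: lap_stencil_def sum_divide_distrib[symmetric] sum.distrib sum_subtractf
      sum_distrib_left algebra_simps)

lemma lap_stencil_Re: "lap_stencil h (\<lambda>x. Re (F x)) x = Re (lap_stencil h F x)"
  by (simp add: lap_stencil_def)

definition second_diff_eigenvalue :: "nat \<Rightarrow> int \<Rightarrow> real" where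
  "second_diff_eigenvalue N a = 4 * (sin (pi * real_of_int a / real N))\<^sup>2"

fun lap_eigenvalue :: "real \<Rightarrow> nat \<Rightarrow> idx3 \<Rightarrow> real" where
  "lap_eigenvalue h N (a, b, c) =
     (second_diff_eigenvalue N a + second_diff_eigenvalue N b + second_diff_eigenvalue N c) / h\<^sup>2"

lemma unit_root_plus_minus: "unit_root N a + unit_root N (- a) = 2 - of_real (second_diff_eigenvalue N a)"
proof -
  define w where "w = pi * real_of_int a / real N"
  have "unit_root N a + unit_root N (- a) = cis (2 * w) + cis (- (2 * w))"
    by (simp add: unit_root_def w_def mult.assoc)
  also have "\<dots> = of_real (2 * cos (2 * w))" by (simp add: complex_eq_iff)
  also have "2 * cos (2 * w) = 2 - second_diff_eigenvalue N a"
    unfolding second_diff_eigenvalue_def w_def[symmetric] cos_double_sin by simp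
  finally show ?thesis by simp
qed

lemma lap_stencil_unit_root:
  assumes "h \<noteq> 0"
  shows "lap_stencil h (\<lambda>x. unit_root N (dot3 k x)) x = - of_real (lap_eigenvalue h N k) * unit_root N (dot3 k x)"
proof -
  obtain a b c where k: "k = (a, b, c)" by (cases k)
  have "lap_stencil h (\<lambda>x. unit_root N (dot3 k x)) x = unit_root N (dot3 k x) *
     ((unit_root N a + unit_root N (- a)) + (unit_root N b + unit_root N (- b))
      + (unit_root N c + unit_root N (- c)) - 6) / of_real (h\<^sup>2)"
    by (cases x) (simp add: lap_stencil_def k unit_root_add[symmetric] algebra_simps)
  then show ?thesis
    unfolding unit_root_plus_minus using assms by (simp add: k field_simps)
qed

lemma dft_lap_stencil:
  assumes "N \<ge> 1" "h \<noteq> 0" "periodic3 N f"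
  shows "dft N (lap_stencil h f) k = - of_real (lap_eigenvalue h N k) * dft N f k"
proof -
  obtain a b c where k: "k = (a, b, c)" by (cases k)
  have "dft N (lap_stencil h f) k = dft N f k * ((unit_root N a + unit_root N (- a))
      + (unit_root N b + unit_root N (- b)) + (unit_root N c + unit_root N (- c)) - 6) / of_real (h\<^sup>2)"
    unfolding lap_stencil_def[abs_def] of_real_eq_id id_apply
    unfolding dft_divide_const dft_diff dft_add dft_mult_const dft_shift[OF assms(1,3)]
    by (simp add: k algebra_simps)
  then show ?thesis
    unfolding unit_root_plus_minus using assms(2) by (simp add: k field_simps)
qed

lemma sin_ge_third: fixes x :: real assumes "0 \<le> x" "x \<le> 2" shows "x / 3 \<le> sin x"
proof -
  have "(\<Sum>m<3. sin_coeff m * x ^ m) = x"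
    by (simp add: numeral_3_eq_3 sin_coeff_def)
  then have "\<bar>sin x - x\<bar> \<le> inverse (fact 3) * \<bar>x\<bar> ^ 3"
    using Maclaurin_sin_bound[of x 3] by simp
  then have "\<bar>sin x - x\<bar> \<le> x ^ 3 / 6" using assms by (simp add: fact_numeral)
  then have "x - sin x \<le> x ^ 3 / 6" by linarith
  moreover have "x ^ 3 \<le> 4 * x"
  proof -
    have "x\<^sup>2 \<le> 2\<^sup>2" using assms by (intro power_mono) auto
    then have "x * x\<^sup>2 \<le> x * 4" using assms by (intro mult_left_mono) auto
    then show ?thesis by (simp add: power3_eq_cube power2_eq_square ac_simps)
  qed
  ultimately show ?thesis by linarith
qed

lemma sin_sq_ge: fixes x :: real assumes "\<bar>x\<bar> \<le> 2" shows "x\<^sup>2 / 9 \<le> (sin x)\<^sup>2"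
proof -
  have "\<bar>x\<bar> / 3 \<le> \<bar>sin x\<bar>"
    using sin_ge_third[of x] sin_ge_third[of "- x"] assms by (cases "x \<ge> 0") auto
  then have "(\<bar>x\<bar> / 3)\<^sup>2 \<le> \<bar>sin x\<bar>\<^sup>2" by (intro power_mono) auto
  then show ?thesis by (simp add: power_divide)
qed

lemma second_diff_eigenvalue_ge:
  assumes "N \<ge> 1" "2 * \<bar>a\<bar> \<le> int N"
  shows "4 * (real_of_int a)\<^sup>2 / (real N)\<^sup>2 \<le> second_diff_eigenvalue N a"
proof -
  define q where "q = real_of_int a / real N"
  have "2 * \<bar>real_of_int a\<bar> \<le> real N" using assms(2) by linarith
  then have "\<bar>q\<bar> \<le> 1/2" using assms(1) by (simp add: q_def abs_divide field_simps)
  have "\<bar>pi * q\<bar> = pi * \<bar>q\<bar>" by (simp add: abs_mult)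
  also have "\<dots> \<le> pi * (1/2)" using \<open>\<bar>q\<bar> \<le> 1/2\<close> by (intro mult_left_mono) auto
  also have "\<dots> \<le> 2" using pi_less_4 by simp
  finally have "(pi * q)\<^sup>2 / 9 \<le> (sin (pi * q))\<^sup>2" by (rule sin_sq_ge)
  moreover have "9 * q\<^sup>2 \<le> (pi * q)\<^sup>2"
  proof -
    have "3 * 3 \<le> pi * pi" using pi_gt3 by (intro mult_mono) auto
    then have "9 * q\<^sup>2 \<le> pi\<^sup>2 * q\<^sup>2" by (intro mult_right_mono) (auto simp: power2_eq_square)
    then show ?thesis by (simp add: power_mult_distrib)
  qed
  ultimately have "q\<^sup>2 \<le> (sin (pi * q))\<^sup>2" by linarith
  then show ?thesis by (simp add: second_diff_eigenvalue_def q_def power_divide)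
qed

fun norm_sq3 :: "idx3 \<Rightarrow> real" where
  "norm_sq3 (a, b, c) = real_of_int (a\<^sup>2 + b\<^sup>2 + c\<^sup>2)"

lemma norm_sq3_ge_1: "k \<noteq> (0, 0, 0) \<Longrightarrow> 1 \<le> norm_sq3 k"
proof (cases k)
  case (fields a b c)
  assume "k \<noteq> (0, 0, 0)"
  then have "1 \<le> a\<^sup>2 \<or> 1 \<le> b\<^sup>2 \<or> 1 \<le> c\<^sup>2"
    using fields by (auto simp: int_one_le_iff_zero_less)
  then have "1 \<le> a\<^sup>2 + b\<^sup>2 + c\<^sup>2"
    using zero_le_power2[of a] zero_le_power2[of b] zero_le_power2[of c] by linarith
  then have "(1::real) \<le> real_of_int (a\<^sup>2 + b\<^sup>2 + c\<^sup>2)" by (metis of_int_1 of_int_le_iff)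
  then show ?thesis by (simp only: fields norm_sq3.simps)
qed

lemma lap_eigenvalue_ge:
  assumes "N \<ge> 1" "L > 0" "k \<in> freq_box N"
  shows "4 * norm_sq3 k / L\<^sup>2 \<le> lap_eigenvalue (L / real N) N k"
proof -
  obtain a b c where k: "k = (a, b, c)" by (cases k)
  have "2 * \<bar>a\<bar> \<le> int N" "2 * \<bar>b\<bar> \<le> int N" "2 * \<bar>c\<bar> \<le> int N"
    using freq_box_abs_le[of a b c N] assms(3) by (simp_all add: k)
  then have "4 * norm_sq3 k / (real N)\<^sup>2
        \<le> second_diff_eigenvalue N a + second_diff_eigenvalue N b + second_diff_eigenvalue N c"
    using second_diff_eigenvalue_ge[OF assms(1)]
    by (simp add: k add_divide_distrib ring_distribs add_mono)
  then have "4 * norm_sq3 k / (real N)\<^sup>2 / (L / real N)\<^sup>2 \<le> lap_eigenvalue (L / real N) N k"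
    unfolding k lap_eigenvalue.simps by (rule divide_right_mono) simp
  moreover have "(real N)\<^sup>2 * (L / real N)\<^sup>2 = L\<^sup>2"
    using assms(1) by (simp add: power_divide)
  ultimately show ?thesis by (simp only: divide_divide_eq_left)
qed

lemma lap_eigenvalue_pos:
  assumes "N \<ge> 1" "L > 0" "k \<in> freq_box N - {(0, 0, 0)}"
  shows "0 < lap_eigenvalue (L / real N) N k"
proof -
  have "0 < 4 * norm_sq3 k / L\<^sup>2" using norm_sq3_ge_1[of k] assms by simp
  also have "\<dots> \<le> lap_eigenvalue (L / real N) N k" using lap_eigenvalue_ge[OF assms(1,2)] assms(3) by simp
  finally show ?thesis .
qed

definition int_cube :: "nat \<Rightarrow> idx3 set" where
  "int_cube r = {-int r..int r} \<times> {-int r..int r} \<times> {-int r..int r}"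

lemma finite_int_cube [simp]: "finite (int_cube r)"
  by (simp add: int_cube_def)

lemma card_int_cube: "card (int_cube r) = (2 * r + 1) ^ 3"
proof -
  have "card {-int r..int r} = 2 * r + 1" by simp
  then show ?thesis by (simp add: int_cube_def card_cartesian_product power3_eq_cube)
qed

lemma int_cube_mono: "int_cube r \<subseteq> int_cube (Suc r)"
  by (auto simp: int_cube_def)

lemma norm_sq3_shell:
  assumes "m \<in> int_cube (Suc r) - int_cube r"
  shows "(real r + 1)\<^sup>2 \<le> norm_sq3 m"
proof -
  obtain a b c where m: "m = (a, b, c)" by (cases m)
  have "int r + 1 \<le> \<bar>a\<bar> \<or> int r + 1 \<le> \<bar>b\<bar> \<or> int r + 1 \<le> \<bar>c\<bar>"
    using assms by (auto simp: int_cube_def m)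
  then have "(int r + 1)\<^sup>2 \<le> a\<^sup>2 \<or> (int r + 1)\<^sup>2 \<le> b\<^sup>2 \<or> (int r + 1)\<^sup>2 \<le> c\<^sup>2"
    by (metis abs_le_square_iff abs_of_nonneg of_nat_0_le_iff add_nonneg_nonneg zero_le_one)
  then have "(int r + 1)\<^sup>2 \<le> a\<^sup>2 + b\<^sup>2 + c\<^sup>2"
    using zero_le_power2[of a] zero_le_power2[of b] zero_le_power2[of c] by linarith
  then have "real_of_int ((int r + 1)\<^sup>2) \<le> real_of_int (a\<^sup>2 + b\<^sup>2 + c\<^sup>2)"
    by (simp only: of_int_le_iff)
  then show ?thesis by (simp add: m)
qed

lemma sum_inverse_norm_sq3_shell:
  "(\<Sum>m\<in>int_cube (Suc r) - int_cube r. 1 / (norm_sq3 m)\<^sup>2) \<le> 26 / (real r + 1)\<^sup>2"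
proof -
  let ?S = "int_cube (Suc r) - int_cube r"
  define q where "q = (real r + 1)\<^sup>2"
  have q: "0 < q" by (simp add: q_def)
  have "1 / (norm_sq3 m)\<^sup>2 \<le> 1 / q\<^sup>2" if "m \<in> ?S" for m
    using norm_sq3_shell[OF that] q unfolding q_def[symmetric]
    by (intro divide_left_mono power_mono mult_pos_pos) auto
  then have "(\<Sum>m\<in>?S. 1 / (norm_sq3 m)\<^sup>2) \<le> real (card ?S) * (1 / q\<^sup>2)"
    by (rule sum_bounded_above)
  moreover have "card ?S \<le> 26 * (r + 1)\<^sup>2"
  proof -
    have "card ?S = (2 * Suc r + 1) ^ 3 - (2 * r + 1) ^ 3"
      using int_cube_mono[of r] by (simp add: card_Diff_subset card_int_cube)
    moreover have "(2 * Suc r + 1) ^ 3 \<le> (2 * r + 1) ^ 3 + 26 * (r + 1)\<^sup>2"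
      by (simp add: power3_eq_cube power2_eq_square algebra_simps)
    ultimately show ?thesis by linarith
  qed
  then have "real (card ?S) \<le> real (26 * (r + 1)\<^sup>2)" by (simp only: of_nat_le_iff)
  then have "real (card ?S) \<le> 26 * q" by (simp add: q_def add.commute)
  ultimately have "(\<Sum>m\<in>?S. 1 / (norm_sq3 m)\<^sup>2) \<le> 26 * q * (1 / q\<^sup>2)"
    by (meson mult_right_mono order_trans zero_le_divide_1_iff zero_le_power2)
  also have "\<dots> = 26 / (real r + 1)\<^sup>2"
    using q by (simp add: q_def power2_eq_square)
  finally show ?thesis .
qed

text \<open>Since 26/q^2 \<le> 52/q - 52/(q+1), the shell bounds telescope.\<close>
lemma sum_inverse_norm_sq3_int_cube:
  "(\<Sum>m\<in>int_cube r - {(0, 0, 0)}. 1 / (norm_sq3 m)\<^sup>2) \<le> 52 - 52 / (real r + 1)"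
proof (induction r)
  case 0
  have "int_cube 0 - {(0, 0, 0)} = {}" by (auto simp: int_cube_def)
  then show ?case by (simp only:) simp
next
  case (Suc r)
  let ?f = "\<lambda>m. 1 / (norm_sq3 m)\<^sup>2"
  have "int_cube (Suc r) - {(0, 0, 0)} = (int_cube r - {(0, 0, 0)}) \<union> (int_cube (Suc r) - int_cube r)"
    using int_cube_mono[of r] by (auto simp: int_cube_def)
  then have "sum ?f (int_cube (Suc r) - {(0, 0, 0)})
      = sum ?f (int_cube r - {(0, 0, 0)}) + sum ?f (int_cube (Suc r) - int_cube r)"
    by (simp only:) (rule sum.union_disjoint, auto)
  moreover have "26 / q\<^sup>2 \<le> 52 / q - 52 / (q + 1)" if "1 \<le> q" for q :: real
  proof -
    have "52 / q - 52 / (q + 1) = 52 / (q * (q + 1))" using that by (simp add: field_simps)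
    moreover have "26 / q\<^sup>2 \<le> 52 / (q * (q + 1))" using that by (simp add: power2_eq_square divide_simps)
    ultimately show ?thesis by simp
  qed
  from this[of "real r + 1"]
  have "26 / (real r + 1)\<^sup>2 \<le> 52 / (real r + 1) - 52 / (real (Suc r) + 1)"
    by simp
  ultimately show ?case
    using Suc.IH sum_inverse_norm_sq3_shell[of r] by linarith
qed

lemma sum_inverse_norm_sq3_freq_box:
  "(\<Sum>m\<in>freq_box N - {(0, 0, 0)}. 1 / (norm_sq3 m)\<^sup>2) \<le> 52"
proof -
  have "freq_box N \<subseteq> int_cube N"
    by (auto simp: freq_box_def window3_def int_cube_def)
  then have "(\<Sum>m\<in>freq_box N - {(0, 0, 0)}. 1 / (norm_sq3 m)\<^sup>2)
      \<le> (\<Sum>m\<in>int_cube N - {(0, 0, 0)}. 1 / (norm_sq3 m)\<^sup>2)"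
    by (intro sum_mono2) auto
  also have "\<dots> \<le> 52 - 52 / (real N + 1)" by (rule sum_inverse_norm_sq3_int_cube)
  also have "\<dots> \<le> 52" by simp
  finally show ?thesis .
qed

definition inverse_lap_series :: "real \<Rightarrow> nat \<Rightarrow> (idx3 \<Rightarrow> real) \<Rightarrow> idx3 \<Rightarrow> complex" where
  "inverse_lap_series h N f x =
     (\<Sum>k\<in>freq_box N - {(0, 0, 0)}.
        dft N f k / (of_real (lap_eigenvalue h N k) * of_nat N ^ 3) * unit_root N (dot3 k x))"

definition fourier_solution :: "real \<Rightarrow> nat \<Rightarrow> grid \<Rightarrow> grid" where
  "fourier_solution h N f i j l = Re (inverse_lap_series h N (grid_at f) (i, j, l))"

lemma grid_at_fourier_solution:
  "grid_at (fourier_solution h N f) = (\<lambda>x. Re (inverse_lap_series h N (grid_at f) x))"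
  by (auto simp: fourier_solution_def)

lemma fourier_solution_periodic: "N \<ge> 1 \<Longrightarrow> grid_periodic N (fourier_solution h N f)"
  using periodic3_unit_root
  by (simp add: grid_periodic_def fourier_solution_def inverse_lap_series_def periodic3_def)

lemma sum_fourier_solution:
  assumes "N \<ge> 1"
  shows "sum (grid_at (fourier_solution h N f)) (grid_box N) = 0"
proof -
  have "(\<Sum>x\<in>grid_box N. inverse_lap_series h N (grid_at f) x)
      = (\<Sum>k\<in>freq_box N - {(0, 0, 0)}. dft N (grid_at f) k / (of_real (lap_eigenvalue h N k) * of_nat N ^ 3)
           * (\<Sum>x\<in>grid_box N. unit_root N (dot3 k x)))"
    unfolding inverse_lap_series_def sum_distrib_left by (rule sum.swap)
  also have "\<dots> = 0" by (simp add: sum_unit_root_grid_box[OF assms])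
  finally show ?thesis by (simp add: grid_at_fourier_solution flip: Re_sum)
qed

lemma lap_fourier_solution:
  assumes "N \<ge> 1" "L > 0" "grid_periodic N f" "sum (grid_at f) (grid_box N) = 0"
  shows "- lap_h (L / real N) (fourier_solution (L / real N) N f) i j l = f i j l"
proof -
  define h where "h = L / real N"
  let ?K = "freq_box N - {(0, 0, 0)}"
  have "h \<noteq> 0" using assms(1,2) by (simp add: h_def)
  have "(\<Sum>k\<in>?K. dft N (grid_at f) k * unit_root N (dot3 k (i, j, l))) = of_nat N ^ 3 * of_real (f i j l)"
    using dft_inversion[OF assms(1) periodic3_grid_at[OF assms(3)], of "(i, j, l)"]
    unfolding sum.remove[OF finite_freq_box zero_in_freq_box[OF assms(1)]]
    by (simp add: dft_zero_freq assms(4))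
  moreover have "lap_stencil h (inverse_lap_series h N (grid_at f)) (i, j, l)
      = - (\<Sum>k\<in>?K. dft N (grid_at f) k * unit_root N (dot3 k (i, j, l))) / of_nat N ^ 3"
  proof -
    have "lap_eigenvalue h N k \<noteq> 0" if "k \<in> ?K" for k
      using lap_eigenvalue_pos[OF assms(1,2) that] by (simp add: h_def)
    then show ?thesis
      unfolding inverse_lap_series_def[abs_def] lap_stencil_sum lap_stencil_unit_root[OF \<open>h \<noteq> 0\<close>]
      by (simp add: sum_divide_distrib sum_negf[symmetric])
  qed
  ultimately have "lap_stencil h (inverse_lap_series h N (grid_at f)) (i, j, l) = - of_real (f i j l)"
    using assms(1) by simp
  then have "lap_h h (fourier_solution h N f) i j l = - f i j l"
    using grid_at_lap_h[of h "fourier_solution h N f"]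
    by (simp add: grid_at_fourier_solution lap_stencil_Re fun_eq_iff)
  then show ?thesis by (simp add: h_def)
qed

lemma lap_h_zero_imp_zero:
  assumes "N \<ge> 1" "L > 0" "grid_periodic N w" "sum (grid_at w) (grid_box N) = 0"
    and "\<And>i j l. lap_h (L / real N) w i j l = 0"
  shows "w i j l = 0"
proof -
  have dft_0: "dft N (grid_at w) k = 0" if "k \<in> freq_box N" for k
  proof (cases "k = (0, 0, 0)")
    case False
    have "L / real N \<noteq> 0" using assms(1,2) by simp
    moreover have "lap_stencil (L / real N) (grid_at w) = (\<lambda>_. 0)"
      unfolding grid_at_lap_h[symmetric] using assms(5) by (auto simp: grid_at_def)
    ultimately have "- of_real (lap_eigenvalue (L / real N) N k) * dft N (grid_at w) k = 0"
      using dft_lap_stencil[OF assms(1) _ periodic3_grid_at[OF assms(3)], of "L / real N" k]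
      by (simp add: dft_def)
    moreover have "lap_eigenvalue (L / real N) N k \<noteq> 0"
      using lap_eigenvalue_pos[OF assms(1,2), of k] that False by simp
    ultimately show ?thesis by simp
  qed (simp add: dft_zero_freq assms(4))
  have "of_nat N ^ 3 * (of_real (w i j l) :: complex) = 0"
    using dft_inversion[OF assms(1) periodic3_grid_at[OF assms(3)], of "(i, j, l)"] by (simp add: dft_0)
  then show ?thesis using assms(1) by simp
qed

lemma grid_inner_one: "grid_inner h N g (\<lambda>_ _ _. 1) = h ^ 3 * sum (grid_at g) (grid_box N)"
  by (simp add: grid_inner_def sum_window3)

lemma Linv_eq_fourier_solution:
  assumes "N \<ge> 1" "L > 0" "grid_periodic N f" "sum (grid_at f) (grid_box N) = 0"
  shows "Linv (L / real N) N f = fourier_solution (L / real N) N f"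
  unfolding Linv_def
proof (rule the_equality)
  let ?h = "L / real N" and ?u = "fourier_solution (L / real N) N f"
  have "?h ^ 3 \<noteq> 0" using assms(1,2) by simp
  show "grid_periodic N ?u \<and> grid_inner ?h N ?u (\<lambda>_ _ _. 1) = 0 \<and> (\<forall>i j k. - lap_h ?h ?u i j k = f i j k)"
    using fourier_solution_periodic[OF assms(1)] sum_fourier_solution[OF assms(1)]
      lap_fourier_solution[OF assms] by (simp add: grid_inner_one)
  fix v assume v: "grid_periodic N v \<and> grid_inner ?h N v (\<lambda>_ _ _. 1) = 0 \<and> (\<forall>i j k. - lap_h ?h v i j k = f i j k)"
  define w where "w i j l = v i j l - ?u i j l" for i j l
  have "grid_periodic N w"
    using v fourier_solution_periodic[OF assms(1), of ?h f] by (simp add: grid_periodic_def w_def)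
  moreover have "sum (grid_at w) (grid_box N) = 0"
  proof -
    have "grid_at w = (\<lambda>x. grid_at v x - grid_at ?u x)" by (auto simp: grid_at_def w_def)
    then show ?thesis
      using v \<open>?h ^ 3 \<noteq> 0\<close> sum_fourier_solution[OF assms(1), of ?h f]
      by (simp add: sum_subtractf grid_inner_one)
  qed
  moreover have "lap_h ?h w i j l = 0" for i j l
  proof -
    have "lap_h ?h w i j l = lap_h ?h v i j l - lap_h ?h ?u i j l"
      by (simp add: w_def lap_h_def diff_divide_distrib[symmetric] algebra_simps)
    moreover have "- lap_h ?h v i j l = - lap_h ?h ?u i j l"
      using v lap_fourier_solution[OF assms, of i j l] by simp
    ultimately show ?thesis by simp
  qed
  ultimately have "w i j l = 0" for i j l by (rule lap_h_zero_imp_zero[OF assms(1,2)])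
  then show "v = ?u" by (auto simp: w_def fun_eq_iff)
qed

lemma norm_inverse_lap_series_le:
  assumes "N \<ge> 1" "L > 0"
  shows "cmod (inverse_lap_series (L / real N) N f x)
    \<le> (\<Sum>k\<in>freq_box N - {(0, 0, 0)}. cmod (dft N f k) * (1 / lap_eigenvalue (L / real N) N k)) / real N ^ 3"
  unfolding inverse_lap_series_def sum_divide_distrib
proof (rule order_trans[OF norm_sum], rule sum_mono)
  fix k assume "k \<in> freq_box N - {(0, 0, 0)}"
  then have "0 < lap_eigenvalue (L / real N) N k" by (rule lap_eigenvalue_pos[OF assms])
  then show "cmod (dft N f k / (of_real (lap_eigenvalue (L / real N) N k) * of_nat N ^ 3) * unit_root N (dot3 k x))
      \<le> cmod (dft N f k) * (1 / lap_eigenvalue (L / real N) N k) / real N ^ 3"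
    by (simp add: norm_mult norm_divide norm_power)
qed

lemma sum_sq_dft_le:
  assumes "N \<ge> 1" "\<And>x. x \<in> grid_box N \<Longrightarrow> \<bar>f x\<bar> \<le> B"
  shows "(\<Sum>k\<in>freq_box N. (cmod (dft N f k))\<^sup>2) \<le> real N ^ 3 * (real N ^ 3 * B\<^sup>2)"
proof -
  have "(\<Sum>x\<in>grid_box N. (f x)\<^sup>2) \<le> real (card (grid_box N)) * B\<^sup>2"
  proof (rule sum_bounded_above)
    fix x assume "x \<in> grid_box N"
    then have "\<bar>f x\<bar>\<^sup>2 \<le> B\<^sup>2" using assms(2) by (intro power_mono) auto
    then show "(f x)\<^sup>2 \<le> B\<^sup>2" by simp
  qed
  then have "(\<Sum>x\<in>grid_box N. (f x)\<^sup>2) \<le> real N ^ 3 * B\<^sup>2"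
    by (simp add: card_window3)
  then show ?thesis
    unfolding dft_parseval[OF assms(1)] by (rule mult_left_mono) simp
qed

lemma sum_inverse_sq_lap_eigenvalue_le:
  assumes "N \<ge> 1" "L > 0"
  shows "(\<Sum>k\<in>freq_box N - {(0, 0, 0)}. (1 / lap_eigenvalue (L / real N) N k)\<^sup>2) \<le> 4 * (L\<^sup>2)\<^sup>2"
proof -
  have termwise: "(1 / lap_eigenvalue (L / real N) N k)\<^sup>2 \<le> (L\<^sup>2 / 4)\<^sup>2 * (1 / (norm_sq3 k)\<^sup>2)"
    if k: "k \<in> freq_box N - {(0, 0, 0)}" for k
  proof -
    have "0 < 4 * norm_sq3 k / L\<^sup>2" using norm_sq3_ge_1[of k] k assms(2) by simp
    then have "1 / lap_eigenvalue (L / real N) N k \<le> 1 / (4 * norm_sq3 k / L\<^sup>2)"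
      using lap_eigenvalue_ge[OF assms] lap_eigenvalue_pos[OF assms k] k
      by (intro divide_left_mono mult_pos_pos) auto
    then have "(1 / lap_eigenvalue (L / real N) N k)\<^sup>2 \<le> (L\<^sup>2 / 4 * (1 / norm_sq3 k))\<^sup>2"
      using lap_eigenvalue_pos[OF assms k] by (intro power_mono) auto
    then show ?thesis by (simp add: power_mult_distrib power_divide)
  qed
  have "(\<Sum>k\<in>freq_box N - {(0, 0, 0)}. (1 / lap_eigenvalue (L / real N) N k)\<^sup>2)
      \<le> (L\<^sup>2 / 4)\<^sup>2 * (\<Sum>k\<in>freq_box N - {(0, 0, 0)}. 1 / (norm_sq3 k)\<^sup>2)"
    unfolding sum_distrib_left using termwise by (rule sum_mono)
  also have "\<dots> \<le> (L\<^sup>2 / 4)\<^sup>2 * 52"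
    by (rule mult_left_mono[OF sum_inverse_norm_sq3_freq_box]) simp
  also have "\<dots> \<le> 4 * (L\<^sup>2)\<^sup>2" by (simp add: power_divide)
  finally show ?thesis .
qed

lemma abs_fourier_solution_le:
  assumes "N \<ge> 1" "L > 0" "0 \<le> B" "\<And>x. x \<in> grid_box N \<Longrightarrow> \<bar>grid_at f x\<bar> \<le> B"
  shows "\<bar>fourier_solution (L / real N) N f i j l\<bar> \<le> 2 * L\<^sup>2 * B"
proof -
  let ?K = "freq_box N - {(0, 0, 0)}" and ?lam = "lap_eigenvalue (L / real N) N"
  define T where "T = (\<Sum>k\<in>?K. cmod (dft N (grid_at f) k) * (1 / ?lam k))"
  have "T\<^sup>2 \<le> (\<Sum>k\<in>?K. (cmod (dft N (grid_at f) k))\<^sup>2) * (\<Sum>k\<in>?K. (1 / ?lam k)\<^sup>2)"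
    unfolding T_def by (rule Cauchy_Schwarz_ineq_sum)
  also have "\<dots> \<le> (real N ^ 3 * (real N ^ 3 * B\<^sup>2)) * (4 * (L\<^sup>2)\<^sup>2)"
  proof (rule mult_mono)
    show "(\<Sum>k\<in>?K. (cmod (dft N (grid_at f) k))\<^sup>2) \<le> real N ^ 3 * (real N ^ 3 * B\<^sup>2)"
      by (rule order_trans[OF sum_mono2 sum_sq_dft_le[OF assms(1,4)]]) auto
  qed (use sum_inverse_sq_lap_eigenvalue_le[OF assms(1,2)] in \<open>auto intro: sum_nonneg\<close>)
  also have "\<dots> = (real N ^ 3 * (2 * L\<^sup>2 * B))\<^sup>2" by algebra
  finally have "T \<le> real N ^ 3 * (2 * L\<^sup>2 * B)"
    by (rule power2_le_imp_le) (use assms(3) in simp)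
  then have "T / real N ^ 3 \<le> real N ^ 3 * (2 * L\<^sup>2 * B) / real N ^ 3"
    by (rule divide_right_mono) simp
  also have "\<dots> = 2 * L\<^sup>2 * B" using assms(1) by simp
  finally have "T / real N ^ 3 \<le> 2 * L\<^sup>2 * B" .
  moreover have "\<bar>fourier_solution (L / real N) N f i j l\<bar> \<le> T / real N ^ 3"
    unfolding fourier_solution_def T_def
    by (rule order_trans[OF abs_Re_le_cmod norm_inverse_lap_series_le[OF assms(1,2)]])
  ultimately show ?thesis by linarith
qed

lemma grid_sup_eq_Max: "grid_sup N f = Max ((\<lambda>x. \<bar>grid_at f x\<bar>) ` grid_box N)"
proof -
  have "{\<bar>f i j k\<bar> | i j k. i \<in> {1..int N} \<and> j \<in> {1..int N} \<and> k \<in> {1..int N}}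
      = (\<lambda>x. \<bar>grid_at f x\<bar>) ` grid_box N"
  proof (intro set_eqI iffI)
    fix y assume "y \<in> {\<bar>f i j k\<bar> | i j k. i \<in> {1..int N} \<and> j \<in> {1..int N} \<and> k \<in> {1..int N}}"
    then obtain i j k where "y = \<bar>f i j k\<bar>" "(i, j, k) \<in> grid_box N" by (auto simp: window3_def)
    then show "y \<in> (\<lambda>x. \<bar>grid_at f x\<bar>) ` grid_box N" by (intro image_eqI[where x="(i, j, k)"]) auto
  next
    fix y assume "y \<in> (\<lambda>x. \<bar>grid_at f x\<bar>) ` grid_box N"
    then obtain x where x: "y = \<bar>grid_at f x\<bar>" "x \<in> grid_box N" by blast
    obtain i j k where "x = (i, j, k)" by (cases x)
    with x have "y = \<bar>f i j k\<bar>" "i \<in> {1..int N} \<and> j \<in> {1..int N} \<and> k \<in> {1..int N}"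
      by (simp_all add: window3_def)
    then show "y \<in> {\<bar>f i j k\<bar> | i j k. i \<in> {1..int N} \<and> j \<in> {1..int N} \<and> k \<in> {1..int N}}"
      by blast
  qed
  then show ?thesis by (simp add: grid_sup_def)
qed

lemma abs_le_grid_sup: "x \<in> grid_box N \<Longrightarrow> \<bar>grid_at f x\<bar> \<le> grid_sup N f"
  unfolding grid_sup_eq_Max by (rule Max_ge) auto

lemma grid_sup_le:
  assumes "N \<ge> 1" "\<And>x. x \<in> grid_box N \<Longrightarrow> \<bar>grid_at f x\<bar> \<le> C"
  shows "grid_sup N f \<le> C"
proof -
  have "(1, 1, 1) \<in> grid_box N" using assms(1) by (simp add: window3_def)
  then show ?thesis
    unfolding grid_sup_eq_Max using assms(2) by (subst Max_le_iff) auto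
qed

theorem lemma3p1:
  fixes L M :: real
  assumes "L > 0" and "M > 0"
  shows "\<exists>C1 > 0. \<forall>(N::nat) (\<phi>1::grid) (\<phi>2::grid).
           N \<ge> 1 \<longrightarrow> grid_periodic N \<phi>1 \<longrightarrow> grid_periodic N \<phi>2 \<longrightarrow>
           grid_inner (L / real N) N (\<lambda>i j k. \<phi>1 i j k - \<phi>2 i j k) (\<lambda>_ _ _. 1) = 0 \<longrightarrow>
           grid_sup N \<phi>1 < 1 \<longrightarrow> grid_sup N \<phi>2 \<le> M \<longrightarrow>
           grid_sup N (Linv (L / real N) N (\<lambda>i j k. \<phi>1 i j k - \<phi>2 i j k)) \<le> C1"
proof (intro exI[of _ "2 * L\<^sup>2 * (1 + M)"] conjI allI impI)
  show "0 < 2 * L\<^sup>2 * (1 + M)" using assms by simp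
  fix N :: nat and \<phi>1 \<phi>2 :: grid
  assume N: "N \<ge> 1" and "grid_periodic N \<phi>1" "grid_periodic N \<phi>2"
    and mean: "grid_inner (L / real N) N (\<lambda>i j k. \<phi>1 i j k - \<phi>2 i j k) (\<lambda>_ _ _. 1) = 0"
    and "grid_sup N \<phi>1 < 1" "grid_sup N \<phi>2 \<le> M"
  define f where "f = (\<lambda>i j k. \<phi>1 i j k - \<phi>2 i j k)"
  have "grid_periodic N f"
    using \<open>grid_periodic N \<phi>1\<close> \<open>grid_periodic N \<phi>2\<close> by (simp add: grid_periodic_def f_def)
  moreover have "sum (grid_at f) (grid_box N) = 0"
    using mean N assms(1) by (simp add: grid_inner_one flip: f_def)
  moreover have "\<bar>grid_at f x\<bar> \<le> 1 + M" if "x \<in> grid_box N" for x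
    using abs_le_grid_sup[OF that, of \<phi>1] abs_le_grid_sup[OF that, of \<phi>2]
      \<open>grid_sup N \<phi>1 < 1\<close> \<open>grid_sup N \<phi>2 \<le> M\<close>
    by (cases x) (simp add: f_def)
  ultimately have "\<bar>grid_at (Linv (L / real N) N f) x\<bar> \<le> 2 * L\<^sup>2 * (1 + M)" for x
    using abs_fourier_solution_le[OF N assms(1)] assms(2)
    by (cases x) (simp add: Linv_eq_fourier_solution[OF N assms(1)])
  then show "grid_sup N (Linv (L / real N) N (\<lambda>i j k. \<phi>1 i j k - \<phi>2 i j k)) \<le> 2 * L\<^sup>2 * (1 + M)"
    unfolding f_def[symmetric] by (rule grid_sup_le[OF N])
qed

end
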